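(* Let $f^{\mathrm{lgt}}:\mathcal{X}\to\mathbb{R}^K$ satisfy $\|f^{\mathrm{lgt}}(x)\|_2\le L_f$ for all $x\in\mathcal{X}$. Let $\mathcal{L}_{\mathrm{calib}}:\mathbb{R}^K\times\mathbb{R}^K\to[0,1]$ be a per-sample calibration loss that is $L_c$-Lipschitz (w.r.t. $\ell_2$) in its second argument. Let $\Gamma>0$ and $\alpha_-\le\alpha_+$ with $\alpha_+-\alpha_-\ge 2\Gamma$, and let $\mathcal{A}=\{\boldsymbol\alpha=(\alpha_0,\dots,\alpha_K):\ |\alpha_j-\alpha_0|\le\Gamma\ \forall\,1\le j\le K,\ \alpha_-\le\alpha_0\le\alpha_+\}$. Given $n$ i.i.d. validation samples $\mathcal{S}=(X_i,Y_i)_{i=1}^n\sim\mathcal{D}$, let $\boldsymbol\alpha^\star\in\arg\min_{\boldsymbol\alpha\in\mathcal{A}}\mathcal{L}_{\mathrm{calib}}(\boldsymbol\alpha,\mathcal{S})$. Then with probability at least $1-\delta$, $$\mathcal{L}_{\mathrm{calib}}(\boldsymbol\alpha^\star,\mathcal{D})\le\min_{\boldsymbol\alpha\in\mathcal{A}}\mathcal{L}_{\mathrm{calib}}(\boldsymbol\alpha,\mathcal{D})+8\sqrt{\frac{\log(2/\delta)}{n}}+E,$$ where $E=\frac{4}{\sqrt n}\sqrt{\log\big(1+4(\alpha_+-\alpha_-)\sqrt n L_fL_c\big)}$ if $\Gamma\le\frac{1}{8\sqrt n L_fL_c}$, and $E=\frac{4}{\sqrt n}\sqrt{\log\big(\frac{\alpha_+-\alpha_-}{2\Gamma}\big)+(K+1)\log\big(8\Gamma\sqrt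 nL_fL_c\big)}$ otherwise.
   Context: Multiclass setup: $X\in\mathcal{X}$, $Y\in\{1,\dots,K\}$, $(X,Y)\sim\mathcal{D}$. The classifier is $f(X)=\mathrm{softmax}(f^{\mathrm{lgt}}(X))$ with predicted label $\hat Y=\arg\max_k f(X)_k$. For a scalar $\alpha$, the temperature-scaled classifier is $f_\alpha(X)=\mathrm{softmax}(\alpha f^{\mathrm{lgt}}(X))$. In $\mathcal{L}_{\mathrm{calib}}(Y,\cdot)$ the label $Y$ is viewed as a vector in $\mathbb{R}^K$ (e.g. one-hot). Class-wise temperature scaling losses: $\mathcal{L}_{\mathrm{calib}}(\boldsymbol\alpha,\mathcal{S})=\frac1n\sum_{i=1}^n\mathcal{L}_{\mathrm{calib}}(Y_i,f_{\alpha_{\hat Y_i}}(X_i))$ and $\mathcal{L}_{\mathrm{calib}}(\boldsymbol\alpha,\mathcal{D})=\mathbb{E}_{(X,Y)\sim\mathcal{D}}[\mathcal{L}_{\mathrm{calib}}(Y,f_{\alpha_{\hat Y}}(X))]$, where $\hat Y=\hat Y(X)$ is the predicted label of the (uncalibrated) classifier $f$ and $\alpha_{\hat Y}$ is the $\hat Y$-th coordinate of $\boldsymbol\alpha$ (the coordinate $\alpha_0$ enters only through the constraint set). *)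

theory Defs
  imports "HOL-Probability.Probability"
begin

text \<open>Classes are the elements of a finite type 'k, with K = CARD('k).
  Vectors in R^K are real^'k (Euclidean l2 norm).
  A parameter alpha = (alpha_0, alpha_1..alpha_K) is a pair (alpha_0, a) with a :: real^'k.\<close>

definition softmax :: "real^'k::finite \<Rightarrow> real^'k" where
  "softmax z = (\<chi> k. exp (z $ k) / (\<Sum>j\<in>UNIV. exp (z $ j)))"

definition temp_scaled :: "('x \<Rightarrow> real^'k::finite) \<Rightarrow> real \<Rightarrow> 'x \<Rightarrow> real^'k" where
  "temp_scaled f a x = softmax (a *\<^sub>R f x)"

definition onehot :: "'k::finite \<Rightarrow> real^'k" where
  "onehot y = (\<chi> j. if j = y then 1 else 0)"

definition cw_loss_emp ::
  "(real^'k \<Rightarrow> real^'k \<Rightarrow> real) \<Rightarrow> ('x \<Rightarrow> real^'k::finite) \<Rightarrow> ('x \<Rightarrow> 'k)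
     \<Rightarrow> real \<times> (real^'k) \<Rightarrow> nat \<Rightarrow> (nat \<Rightarrow> 'x \<times> 'k) \<Rightarrow> real" where
  "cw_loss_emp L f yhat \<alpha> n S =
     (1 / real n) * (\<Sum>i<n. L (onehot (snd (S i)))
        (temp_scaled f (snd \<alpha> $ yhat (fst (S i))) (fst (S i))))"

definition cw_loss_pop ::
  "(real^'k \<Rightarrow> real^'k \<Rightarrow> real) \<Rightarrow> ('x \<Rightarrow> real^'k::finite) \<Rightarrow> ('x \<Rightarrow> 'k)
     \<Rightarrow> real \<times> (real^'k) \<Rightarrow> ('x \<times> 'k) measure \<Rightarrow> real" where
  "cw_loss_pop L f yhat \<alpha> D =
     (\<integral>p. L (onehot (snd p)) (temp_scaled f (snd \<alpha> $ yhat (fst p)) (fst p)) \<partial>D)"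

definition param_set :: "real \<Rightarrow> real \<Rightarrow> real \<Rightarrow> (real \<times> (real^'k::finite)) set" where
  "param_set \<Gamma> am ap =
     {\<alpha>. (\<forall>j. \<bar>snd \<alpha> $ j - fst \<alpha>\<bar> \<le> \<Gamma>) \<and> am \<le> fst \<alpha> \<and> fst \<alpha> \<le> ap}"

end

theory Submission
  imports Defs
begin

text \<open>
  For a fixed parameter the loss of a sample is a \<open>[0, 1]\<close>-valued random variable, so Hoeffding's
  inequality and a union bound control the gap between empirical and population loss
  simultaneously on a finite net of the parameter set. Since \<open>softmax (r *\<^sub>R z)\<close> is
  \<open>2 \<parallel>z\<parallel>\<close>-Lipschitz in the temperature \<open>r\<close>, the per-sample loss is \<open>2 L\<^sub>f L\<^sub>c\<close>-Lipschitz in the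
  sup-distance of the class-wise temperatures, so the uniform deviation extends from the net to
  the whole parameter set at the price of the net radius, and an empirical minimiser has excess
  risk at most twice the uniform deviation. For small \<open>\<Gamma>\<close> a net of constant temperature vectors
  suffices; otherwise \<open>\<alpha>\<^sub>0\<close> is gridded at scale \<open>2 \<Gamma>\<close> and every coordinate in a window of width
  \<open>4 \<Gamma>\<close>, with a resolution that makes the discretisation error \<open>O(1 / \<surd>n)\<close>.
\<close>

section \<open>Temperature sensitivity of softmax\<close>

lemma softmax_nonneg: "0 \<le> softmax z $ k"
  by (simp add: softmax_def sum_nonneg)

lemma sum_softmax: "(\<Sum>k\<in>UNIV. softmax z $ k) = 1"
proof -
  have "(\<Sum>j\<in>UNIV. exp (z $ j)) > 0"
    by (intro sum_pos) auto
  then show ?thesis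
    by (simp add: softmax_def sum_divide_distrib[symmetric])
qed

lemma abs_softmax_mean_le_norm: "\<bar>\<Sum>j\<in>UNIV. softmax w $ j * z $ j\<bar> \<le> norm z"
proof -
  have "\<bar>\<Sum>j\<in>UNIV. softmax w $ j * z $ j\<bar> \<le> (\<Sum>j\<in>UNIV. softmax w $ j * norm z)"
    by (intro order_trans[OF sum_abs] sum_mono)
       (simp add: abs_mult softmax_nonneg mult_left_mono component_le_norm_cart)
  also have "\<dots> = norm z"
    by (simp add: sum_distrib_right[symmetric] sum_softmax)
  finally show ?thesis .
qed

lemma has_real_derivative_softmax_scaleR:
  fixes z :: "real^'k::finite"
  shows "((\<lambda>r. softmax (r *\<^sub>R z) $ k) has_real_derivative
           softmax (r *\<^sub>R z) $ k * (z $ k - (\<Sum>j\<in>UNIV. softmax (r *\<^sub>R z) $ j * z $ j))) (at r)"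
proof -
  define Z where "Z = (\<lambda>r. \<Sum>j\<in>UNIV. exp (r * z $ j))"
  have Z_pos: "Z r > 0"
    unfolding Z_def by (intro sum_pos) auto
  have "((\<lambda>r. exp (r * z $ k) / Z r) has_real_derivative
      (exp (r * z $ k) * z $ k * Z r - exp (r * z $ k) * (\<Sum>j\<in>UNIV. exp (r * z $ j) * z $ j))
        / (Z r * Z r)) (at r)"
    unfolding Z_def using Z_pos[unfolded Z_def]
    by (auto intro!: derivative_eq_intros)
  then show ?thesis
    using Z_pos by (simp add: softmax_def Z_def field_simps sum_divide_distrib[symmetric] sum_distrib_left)
qed

lemma norm_softmax_scaleR_diff_le_of_less:
  fixes z :: "real^'k::finite"
  assumes "s < t"
  shows "norm (softmax (t *\<^sub>R z) - softmax (s *\<^sub>R z)) \<le> 2 * (t - s) * norm z"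
proof -
  \<comment> \<open>mean value theorem for \<open>r \<mapsto> u \<bullet> softmax (r *\<^sub>R z)\<close>, where \<open>u\<close> is the difference to be bounded\<close>
  define u where "u = softmax (t *\<^sub>R z) - softmax (s *\<^sub>R z)"
  define \<phi> where "\<phi> = (\<lambda>r. softmax (r *\<^sub>R z))"
  define h' where "h' = (\<lambda>r. \<Sum>k\<in>UNIV. u $ k * (\<phi> r $ k * (z $ k - (\<Sum>j\<in>UNIV. \<phi> r $ j * z $ j))))"
  have "((\<lambda>r. u \<bullet> \<phi> r) has_real_derivative h' r) (at r)" for r
    unfolding inner_vec_def h'_def \<phi>_def
    by (auto intro!: derivative_eq_intros has_real_derivative_softmax_scaleR simp: mult.commute)
  then obtain \<xi> where "u \<bullet> \<phi> t - u \<bullet> \<phi> s = (t - s) * h' \<xi>"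
    using MVT2[OF assms] by blast
  then have norm_u_sq: "norm u ^ 2 = (t - s) * h' \<xi>"
    by (simp add: u_def \<phi>_def power2_norm_eq_inner inner_diff_right)
  have "\<bar>h' \<xi>\<bar> \<le> (\<Sum>k\<in>UNIV. norm u * (\<phi> \<xi> $ k * (2 * norm z)))"
    unfolding h'_def
  proof (intro order_trans[OF sum_abs] sum_mono)
    fix k
    have "\<bar>z $ k - (\<Sum>j\<in>UNIV. \<phi> \<xi> $ j * z $ j)\<bar> \<le> 2 * norm z"
      using abs_softmax_mean_le_norm[of "\<xi> *\<^sub>R z" z] component_le_norm_cart[of z k]
      unfolding \<phi>_def by linarith
    then show "\<bar>u $ k * (\<phi> \<xi> $ k * (z $ k - (\<Sum>j\<in>UNIV. \<phi> \<xi> $ j * z $ j)))\<bar>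
        \<le> norm u * (\<phi> \<xi> $ k * (2 * norm z))"
      unfolding abs_mult using component_le_norm_cart[of u k] softmax_nonneg[of _ k]
      by (intro mult_mono mult_left_mono) (auto simp: \<phi>_def)
  qed
  also have "\<dots> = 2 * norm u * norm z"
    by (simp add: sum_distrib_left[symmetric] sum_distrib_right[symmetric] \<phi>_def sum_softmax)
  finally have "norm u * norm u \<le> (t - s) * (2 * norm u * norm z)"
    using norm_u_sq assms mult_left_mono[of "h' \<xi>" _ "t - s"]
    by (simp add: power2_eq_square)
  then have "norm u * norm u \<le> norm u * (2 * (t - s) * norm z)"
    by (simp add: algebra_simps)
  moreover have "0 \<le> 2 * (t - s) * norm z"
    using assms by simp
  ultimately show ?thesis
    unfolding u_def[symmetric]
    by (cases "norm u = 0") (simp_all add: mult_le_cancel_left_pos)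
qed

lemma norm_softmax_scaleR_diff_le:
  fixes z :: "real^'k::finite"
  shows "norm (softmax (t *\<^sub>R z) - softmax (s *\<^sub>R z)) \<le> 2 * \<bar>t - s\<bar> * norm z"
proof (cases s t rule: linorder_cases)
  case less
  then show ?thesis using norm_softmax_scaleR_diff_le_of_less[OF less] by simp
next
  case greater
  then show ?thesis
    using norm_softmax_scaleR_diff_le_of_less[OF greater, of z] by (simp add: norm_minus_commute)
qed simp

section \<open>The per-sample calibration loss\<close>

definition sample_loss ::
  "(real^'k \<Rightarrow> real^'k \<Rightarrow> real) \<Rightarrow> ('x \<Rightarrow> real^'k::finite) \<Rightarrow> ('x \<Rightarrow> 'k)
     \<Rightarrow> real \<times> (real^'k) \<Rightarrow> 'x \<times> 'k \<Rightarrow> real" where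
  "sample_loss L f yhat \<alpha> p = L (onehot (snd p)) (temp_scaled f (snd \<alpha> $ yhat (fst p)) (fst p))"

lemma cw_loss_emp_eq_mean:
  "cw_loss_emp L f yhat \<alpha> n S = (\<Sum>i<n. sample_loss L f yhat \<alpha> (S i)) / real n"
  by (simp add: cw_loss_emp_def sample_loss_def)

lemma cw_loss_pop_eq_integral:
  "cw_loss_pop L f yhat \<alpha> D = (\<integral>p. sample_loss L f yhat \<alpha> p \<partial>D)"
  by (simp add: cw_loss_pop_def sample_loss_def)

lemma sample_loss_lipschitz:
  assumes L_lip: "\<forall>u v w. \<bar>L u v - L u w\<bar> \<le> Lc * dist v w" and "Lc \<ge> 0"
    and bound_f: "\<forall>x. norm (f x) \<le> Lf"
    and close: "\<forall>j. \<bar>snd \<alpha> $ j - snd \<beta> $ j\<bar> \<le> \<rho>"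
  shows "\<bar>sample_loss L f yhat \<alpha> p - sample_loss L f yhat \<beta> p\<bar> \<le> 2 * Lf * Lc * \<rho>"
proof -
  let ?x = "fst p" and ?k = "yhat (fst p)"
  have "\<bar>sample_loss L f yhat \<alpha> p - sample_loss L f yhat \<beta> p\<bar>
      \<le> Lc * norm (softmax (snd \<alpha> $ ?k *\<^sub>R f ?x) - softmax (snd \<beta> $ ?k *\<^sub>R f ?x))"
    using L_lip by (simp add: sample_loss_def temp_scaled_def dist_norm)
  also have "\<dots> \<le> Lc * (2 * \<bar>snd \<alpha> $ ?k - snd \<beta> $ ?k\<bar> * norm (f ?x))"
    using \<open>Lc \<ge> 0\<close> by (intro mult_left_mono norm_softmax_scaleR_diff_le)
  also have "\<dots> \<le> Lc * (2 * \<rho> * Lf)"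
    using \<open>Lc \<ge> 0\<close> close bound_f by (intro mult_left_mono mult_mono) auto
  finally show ?thesis
    by (simp add: algebra_simps)
qed

lemma continuous_on_softmax: "continuous_on UNIV softmax"
proof -
  have "(\<Sum>j\<in>UNIV. exp (z $ j)) \<noteq> 0" for z :: "real^'k::finite"
    using sum_pos[of UNIV "\<lambda>j. exp (z $ j)"] by simp
  then show ?thesis
    unfolding softmax_def[abs_def] by (intro continuous_on_vec_lambda continuous_intros) auto
qed

lemma sample_loss_measurable:
  fixes D :: "('x \<times> 'k::finite) measure"
  assumes "(\<lambda>p. f (fst p)) \<in> borel_measurable D"
    and "(\<lambda>p. yhat (fst p)) \<in> measurable D (count_space UNIV)"
    and "snd \<in> measurable D (count_space UNIV)"
    and "(\<lambda>(u, v). L u v) \<in> borel_measurable borel"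
  shows "sample_loss L f yhat \<alpha> \<in> borel_measurable D"
proof -
  have "(\<lambda>p. onehot (snd p)) \<in> borel_measurable D"
    using measurable_compose_countable[of "\<lambda>y p. onehot y" D borel snd] assms(3) by simp
  moreover have "(\<lambda>p. snd \<alpha> $ yhat (fst p)) \<in> borel_measurable D"
    using measurable_compose_countable[of "\<lambda>y p. snd \<alpha> $ y" D borel "\<lambda>p. yhat (fst p)"] assms(2)
    by simp
  then have "(\<lambda>p. softmax (snd \<alpha> $ yhat (fst p) *\<^sub>R f (fst p))) \<in> borel_measurable D"
    using assms(1) continuous_on_softmax
    by (intro measurable_compose[OF borel_measurable_scaleR] borel_measurable_continuous_onI)
  ultimately have "(\<lambda>p. (onehot (snd p), softmax (snd \<alpha> $ yhat (fst p) *\<^sub>R f (fst p))))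
      \<in> borel_measurable D"
    by (simp add: borel_prod[symmetric])
  from measurable_compose[OF this assms(4)] show ?thesis
    by (simp add: sample_loss_def[abs_def] temp_scaled_def)
qed

section \<open>Uniform deviation and empirical risk minimisation\<close>

lemma indep_vars_PiM_components:
  assumes "finite I" "I \<noteq> {}" and M: "\<And>i. i \<in> I \<Longrightarrow> prob_space (M i)"
  shows "prob_space.indep_vars (PiM I M) M (\<lambda>i \<omega>. \<omega> i) I"
proof -
  interpret P: prob_space "PiM I M"
    using M by (rule prob_space_PiM)
  have "distr (PiM I M) (PiM I M) (\<lambda>\<omega>. \<lambda>i\<in>I. \<omega> i) = distr (PiM I M) (PiM I M) (\<lambda>\<omega>. \<omega>)"
    by (intro distr_cong) (auto simp: space_PiM)
  also have "\<dots> = (\<Pi>\<^sub>M i\<in>I. distr (PiM I M) (M i) (\<lambda>\<omega>. \<omega> i))"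
    using assms by (auto intro!: PiM_cong simp: distr_PiM_component)
  finally show ?thesis
    using assms(2) by (subst P.indep_vars_iff_distr_eq_PiM') auto
qed

lemma hoeffding_sample_mean:
  fixes D :: "'p measure" and g :: "'p \<Rightarrow> real"
  assumes D: "prob_space D" and g: "g \<in> borel_measurable D"
    and g_range: "\<And>p. 0 \<le> g p \<and> g p \<le> 1" and "n > 0" and "\<epsilon> \<ge> 0"
  shows "measure (PiM {..<n} (\<lambda>_. D))
           {S \<in> space (PiM {..<n} (\<lambda>_. D)). \<epsilon> \<le> \<bar>(\<Sum>i<n. g (S i)) / real n - (\<integral>p. g p \<partial>D)\<bar>}
         \<le> 2 * exp (- 2 * real n * \<epsilon>\<^sup>2)"
proof -
  let ?M = "PiM {..<n} (\<lambda>_. D)"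
  have nonempty: "{..<n} \<noteq> {}" using \<open>n > 0\<close> by auto
  have distr_component: "distr ?M D (\<lambda>S. S i) = D" if "i < n" for i
    using that D by (subst distr_PiM_component) auto
  interpret M: prob_space ?M
    using D by (intro prob_space_PiM)
  interpret H: Hoeffding_ineq_iid ?M "{..<n}" "\<lambda>i S. g (S i)" "\<lambda>S. g (S 0)" 0 1 "\<integral>p. g p \<partial>D"
  proof unfold_locales
    show "prob_space.indep_vars ?M (\<lambda>_. borel) (\<lambda>i S. g (S i)) {..<n}"
      using prob_space.indep_vars_compose2[OF prob_space_PiM
            indep_vars_PiM_components[of "{..<n}" "\<lambda>_. D"], of "\<lambda>_. g" "\<lambda>_. borel"] D g nonempty
      by simp
    show "distr ?M borel (\<lambda>S. g (S i)) = distr ?M borel (\<lambda>S. g (S 0))" if "i \<in> {..<n}" for i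
      using that \<open>n > 0\<close> g
      by (subst (1 2) distr_distr[symmetric, where N = D, simplified comp_def])
         (auto simp: distr_component)
    have "(\<integral>S. g (S 0) \<partial>?M) = (\<integral>p. g p \<partial>distr ?M D (\<lambda>S. S 0))"
      using \<open>n > 0\<close> g by (subst integral_distr) auto
    then show "(\<integral>p. g p \<partial>D) \<equiv> prob_space.expectation ?M (\<lambda>S. g (S 0))"
      using distr_component[of 0] \<open>n > 0\<close> by simp
    show "(\<lambda>S. g (S 0)) \<in> borel_measurable ?M"
      using g \<open>n > 0\<close> by (intro measurable_compose[OF measurable_component_singleton]) auto
    show "AE S in ?M. g (S 0) \<in> {0..1}"
      using g_range by simp
  qed (simp_all add: M.sigma_finite_countable M.emeasure_space_1)
  show ?thesis
    using H.Hoeffding_ineq_abs_ge'[OF \<open>\<epsilon> \<ge> 0\<close> _ nonempty] by simp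
qed

lemma uniform_deviation_finite_class:
  fixes D :: "'p measure" and g :: "'a \<Rightarrow> 'p \<Rightarrow> real"
  assumes D: "prob_space D" and "finite G"
    and g: "\<And>a. a \<in> G \<Longrightarrow> g a \<in> borel_measurable D"
    and g_range: "\<And>a p. a \<in> G \<Longrightarrow> 0 \<le> g a p \<and> g a p \<le> 1"
    and "n > 0" and card: "real (card G) \<le> N" and \<delta>: "0 < \<delta>" "\<delta> \<le> 2 * N"
  shows "\<exists>A\<in>sets (PiM {..<n} (\<lambda>_. D)). 1 - \<delta> \<le> measure (PiM {..<n} (\<lambda>_. D)) A \<and>
     (\<forall>S\<in>A. \<forall>a\<in>G. \<bar>(\<Sum>i<n. g a (S i)) / real n - (\<integral>p. g a p \<partial>D)\<bar>
                      \<le> sqrt (ln (2 * N / \<delta>) / (2 * real n)))"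
proof -
  define M where "M = PiM {..<n} (\<lambda>_. D)"
  interpret M: prob_space M
    unfolding M_def using D by (intro prob_space_PiM)
  define \<epsilon> where "\<epsilon> = sqrt (ln (2 * N / \<delta>) / (2 * real n))"
  define bad where "bad a = {S \<in> space M. \<epsilon> \<le> \<bar>(\<Sum>i<n. g a (S i)) / real n - (\<integral>p. g a p \<partial>D)\<bar>}"
    for a
  have bad_sets: "bad a \<in> sets M" if "a \<in> G" for a
    unfolding bad_def M_def using g[OF that] by measurable
  have ln_nonneg: "ln (2 * N / \<delta>) \<ge> 0"
    using \<delta> by simp
  then have "2 * real n * \<epsilon>\<^sup>2 = ln (2 * N / \<delta>)"
    using \<open>n > 0\<close> by (simp add: \<epsilon>_def ln_nonneg)
  then have exp_eq: "2 * exp (- 2 * real n * \<epsilon>\<^sup>2) = \<delta> / N"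
    using \<delta> by (simp add: exp_minus)
  have bad_prob: "M.prob (bad a) \<le> \<delta> / N" if "a \<in> G" for a
    unfolding bad_def M_def exp_eq[symmetric]
    by (rule hoeffding_sample_mean[OF D g[OF that] g_range[OF that] \<open>n > 0\<close>]) (simp add: \<epsilon>_def ln_nonneg)
  have "M.prob (\<Union>a\<in>G. bad a) \<le> (\<Sum>a\<in>G. M.prob (bad a))"
    using \<open>finite G\<close> bad_sets by (intro measure_UNION_le) auto
  also have "\<dots> \<le> real (card G) * (\<delta> / N)"
    using bad_prob sum_mono[of G "\<lambda>a. M.prob (bad a)" "\<lambda>_. \<delta> / N"] by simp
  also have "\<dots> \<le> \<delta>"
    using card \<delta> by (simp add: field_simps)
  finally have "1 - \<delta> \<le> M.prob (space M - (\<Union>a\<in>G. bad a))"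
    using \<open>finite G\<close> bad_sets by (subst M.prob_compl) auto
  moreover have "space M - (\<Union>a\<in>G. bad a) \<in> sets M"
    using \<open>finite G\<close> bad_sets by auto
  ultimately show ?thesis
    unfolding M_def[symmetric] \<epsilon>_def[symmetric] by (intro bexI[of _ "space M - (\<Union>a\<in>G. bad a)"]) (auto simp: bad_def)
qed

lemma erm_excess_risk_le:
  fixes emp pop :: "'a \<Rightarrow> real"
  assumes "\<theta> \<in> \<Theta>" and erm: "\<forall>\<alpha>\<in>\<Theta>. emp \<theta> \<le> emp \<alpha>"
    and dev: "\<forall>\<alpha>\<in>\<Theta>. \<bar>emp \<alpha> - pop \<alpha>\<bar> \<le> \<epsilon>"
  shows "pop \<theta> \<le> (INF \<alpha>\<in>\<Theta>. pop \<alpha>) + 2 * \<epsilon>"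
proof -
  have "pop \<theta> - 2 * \<epsilon> \<le> pop \<alpha>" if "\<alpha> \<in> \<Theta>" for \<alpha>
  proof -
    have "pop \<theta> \<le> emp \<theta> + \<epsilon>" "emp \<alpha> \<le> pop \<alpha> + \<epsilon>"
      using dev that \<open>\<theta> \<in> \<Theta>\<close> by (auto simp: abs_le_iff)
    then show ?thesis
      using erm that by fastforce
  qed
  then have "pop \<theta> - 2 * \<epsilon> \<le> (INF \<alpha>\<in>\<Theta>. pop \<alpha>)"
    using \<open>\<theta> \<in> \<Theta>\<close> by (intro cINF_greatest) auto
  then show ?thesis by simp
qed

lemma sample_mean_deviation_le_of_close:
  fixes g h :: "'p \<Rightarrow> real"
  assumes "prob_space D" "integrable D g" "integrable D h"
    and close: "\<And>p. \<bar>g p - h p\<bar> \<le> \<Delta>"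
    and dev: "\<bar>(\<Sum>i<n. h (S i)) / real n - (\<integral>p. h p \<partial>D)\<bar> \<le> t"
  shows "\<bar>(\<Sum>i<n. g (S i)) / real n - (\<integral>p. g p \<partial>D)\<bar> \<le> t + 2 * \<Delta>"
proof -
  have "\<bar>(\<Sum>i<n. g (S i)) - (\<Sum>i<n. h (S i))\<bar> \<le> real n * \<Delta>"
    using close sum_abs[of "\<lambda>i. g (S i) - h (S i)" "{..<n}"]
      sum_mono[of "{..<n}" "\<lambda>i. \<bar>g (S i) - h (S i)\<bar>" "\<lambda>_. \<Delta>"]
    by (simp add: sum_subtractf)
  then have mean: "\<bar>(\<Sum>i<n. g (S i)) / real n - (\<Sum>i<n. h (S i)) / real n\<bar> \<le> \<Delta>"
    using close[of undefined]
    by (cases "n = 0") (auto simp: diff_divide_distrib[symmetric] field_simps)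
  have "\<bar>(\<integral>p. g p \<partial>D) - (\<integral>p. h p \<partial>D)\<bar> = \<bar>\<integral>p. g p - h p \<partial>D\<bar>"
    using assms by simp
  also have "\<dots> \<le> (\<integral>p. \<bar>g p - h p\<bar> \<partial>D)"
    by (rule integral_abs_bound)
  also have "\<dots> \<le> (\<integral>p. \<Delta> \<partial>D)"
    using assms prob_space.finite_measure[OF assms(1)]
    by (intro integral_mono) (auto intro: finite_measure.integrable_const)
  also have "\<dots> = \<Delta>"
    using prob_space.prob_space[OF assms(1)] by simp
  finally show ?thesis
    using mean dev unfolding abs_le_iff by linarith
qed

lemma erm_excess_risk_bound_of_net:
  fixes D :: "'p measure" and g :: "'a \<Rightarrow> 'p \<Rightarrow> real" and \<theta> :: "(nat \<Rightarrow> 'p) \<Rightarrow> 'a"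
  assumes D: "prob_space D"
    and g: "\<And>a. g a \<in> borel_measurable D" and g_range: "\<And>a p. 0 \<le> g a p \<and> g a p \<le> 1"
    and "n > 0" and "finite G" and card: "real (card G) \<le> N" and \<delta>: "0 < \<delta>" "\<delta> \<le> 2 * N"
    and net: "\<forall>\<alpha>\<in>\<Theta>. \<exists>a\<in>G. \<forall>p. \<bar>g \<alpha> p - g a p\<bar> \<le> \<Delta>"
    and erm: "\<forall>S. \<theta> S \<in> \<Theta> \<and>
      (\<forall>\<alpha>\<in>\<Theta>. (\<Sum>i<n. g (\<theta> S) (S i)) / real n \<le> (\<Sum>i<n. g \<alpha> (S i)) / real n)"
  shows "\<exists>A\<in>sets (PiM {..<n} (\<lambda>_. D)). 1 - \<delta> \<le> measure (PiM {..<n} (\<lambda>_. D)) A \<and>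
     (\<forall>S\<in>A. (\<integral>p. g (\<theta> S) p \<partial>D)
        \<le> (INF \<alpha>\<in>\<Theta>. \<integral>p. g \<alpha> p \<partial>D) + 2 * sqrt (ln (2 * N / \<delta>) / (2 * real n)) + 4 * \<Delta>)"
proof -
  let ?t = "sqrt (ln (2 * N / \<delta>) / (2 * real n))"
  let ?emp = "\<lambda>S \<alpha>. (\<Sum>i<n. g \<alpha> (S i)) / real n" and ?pop = "\<lambda>\<alpha>. \<integral>p. g \<alpha> p \<partial>D"
  obtain A where A: "A \<in> sets (PiM {..<n} (\<lambda>_. D))" "1 - \<delta> \<le> measure (PiM {..<n} (\<lambda>_. D)) A"
    and dev_net: "\<forall>S\<in>A. \<forall>a\<in>G. \<bar>?emp S a - ?pop a\<bar> \<le> ?t"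
    using uniform_deviation_finite_class[where g = g, OF D \<open>finite G\<close> g g_range \<open>n > 0\<close> card \<delta>]
    by (elim bexE conjE) (rule that)
  interpret D: prob_space D
    by (rule D)
  have integrable: "integrable D (g a)" for a
    using g g_range by (intro D.integrable_const_bound[where B = 1]) auto
  have "?pop (\<theta> S) \<le> (INF \<alpha>\<in>\<Theta>. ?pop \<alpha>) + 2 * (?t + 2 * \<Delta>)" if "S \<in> A" for S
  proof (rule erm_excess_risk_le[of _ _ "?emp S"])
    show "\<forall>\<alpha>\<in>\<Theta>. \<bar>?emp S \<alpha> - ?pop \<alpha>\<bar> \<le> ?t + 2 * \<Delta>"
    proof
      fix \<alpha> assume "\<alpha> \<in> \<Theta>"
      then obtain a where "a \<in> G" and close: "\<forall>p. \<bar>g \<alpha> p - g a p\<bar> \<le> \<Delta>"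
        using net by blast
      then show "\<bar>?emp S \<alpha> - ?pop \<alpha>\<bar> \<le> ?t + 2 * \<Delta>"
        using dev_net \<open>S \<in> A\<close> integrable close
        by (intro sample_mean_deviation_le_of_close[OF D, where h = "g a"]) auto
    qed
  qed (use erm in auto)
  then show ?thesis
    using A by (intro bexI[of _ A]) (auto simp: algebra_simps)
qed

lemma cw_excess_risk_bound_of_net:
  fixes D :: "('x \<times> 'k::finite) measure"
    and astar :: "(nat \<Rightarrow> 'x \<times> 'k) \<Rightarrow> real \<times> (real^'k)"
    and V :: "(real^'k) set"
  assumes D: "prob_space D"
    and meas_f: "(\<lambda>p. f (fst p)) \<in> borel_measurable D"
    and meas_yhat: "(\<lambda>p. yhat (fst p)) \<in> measurable D (count_space UNIV)"
    and meas_y: "snd \<in> measurable D (count_space UNIV)"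
    and meas_L: "(\<lambda>(u, v). L u v) \<in> borel_measurable borel"
    and bound_f: "\<forall>x. norm (f x) \<le> Lf" and "Lc \<ge> 0"
    and L_range: "\<forall>u v. 0 \<le> L u v \<and> L u v \<le> 1"
    and L_lip: "\<forall>u v w. \<bar>L u v - L u w\<bar> \<le> Lc * dist v w"
    and "n > 0" and \<delta>: "0 < \<delta>" "\<delta> \<le> 2 * N"
    and astar_min: "\<forall>S. astar S \<in> \<Theta> \<and>
        (\<forall>\<alpha>\<in>\<Theta>. cw_loss_emp L f yhat (astar S) n S \<le> cw_loss_emp L f yhat \<alpha> n S)"
    and "finite V" and card: "real (card V) \<le> N"
    and net: "\<forall>\<alpha>\<in>\<Theta>. \<exists>v\<in>V. \<forall>j. \<bar>snd \<alpha> $ j - v $ j\<bar> \<le> \<rho>"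
    and budget: "2 * sqrt (ln (2 * N / \<delta>) / (2 * real n)) + 8 * Lf * Lc * \<rho> \<le> B"
  shows "\<exists>A\<in>sets (PiM {..<n} (\<lambda>_. D)). 1 - \<delta> \<le> measure (PiM {..<n} (\<lambda>_. D)) A \<and>
     (\<forall>S\<in>A. cw_loss_pop L f yhat (astar S) D \<le> (INF \<alpha>\<in>\<Theta>. cw_loss_pop L f yhat \<alpha> D) + B)"
proof -
  \<comment> \<open>the loss ignores \<open>fst \<alpha>\<close>, so the net may be lifted with any first coordinate\<close>
  let ?G = "Pair 0 ` V"
  have range: "0 \<le> sample_loss L f yhat \<alpha> p \<and> sample_loss L f yhat \<alpha> p \<le> 1" for \<alpha> p
    using L_range by (simp add: sample_loss_def)
  have card_G: "real (card ?G) \<le> N"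
    using card_image_le[OF \<open>finite V\<close>, of "Pair 0"] card of_nat_le_iff order_trans by metis
  have net_G: "\<forall>\<alpha>\<in>\<Theta>. \<exists>a\<in>?G. \<forall>p. \<bar>sample_loss L f yhat \<alpha> p - sample_loss L f yhat a p\<bar>
      \<le> 2 * Lf * Lc * \<rho>"
    using net sample_loss_lipschitz[OF L_lip \<open>Lc \<ge> 0\<close> bound_f] by fastforce
  have erm: "\<forall>S. astar S \<in> \<Theta> \<and> (\<forall>\<alpha>\<in>\<Theta>. (\<Sum>i<n. sample_loss L f yhat (astar S) (S i)) / real n
      \<le> (\<Sum>i<n. sample_loss L f yhat \<alpha> (S i)) / real n)"
    using astar_min by (simp add: cw_loss_emp_eq_mean)
  from erm_excess_risk_bound_of_net[where g = "sample_loss L f yhat",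
        OF D sample_loss_measurable[OF meas_f meas_yhat meas_y meas_L] range \<open>n > 0\<close>
        finite_imageI[OF \<open>finite V\<close>] card_G \<delta> net_G erm]
  obtain A where "A \<in> sets (PiM {..<n} (\<lambda>_. D))" "1 - \<delta> \<le> measure (PiM {..<n} (\<lambda>_. D)) A"
    and "\<forall>S\<in>A. cw_loss_pop L f yhat (astar S) D \<le> (INF \<alpha>\<in>\<Theta>. cw_loss_pop L f yhat \<alpha> D)
        + 2 * sqrt (ln (2 * N / \<delta>) / (2 * real n)) + 4 * (2 * Lf * Lc * \<rho>)"
    by (auto simp: cw_loss_pop_eq_integral)
  with budget show ?thesis
    by (intro bexI[of _ A]) auto
qed

section \<open>Nets of the parameter set\<close>

lemma nat_floor_bounds:
  fixes q :: real
  assumes "q \<ge> 0"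
  shows "real (nat \<lfloor>q\<rfloor>) \<le> q" "q < real (nat \<lfloor>q\<rfloor>) + 1"
  using assms of_int_floor_le[of q] real_of_int_floor_add_one_gt[of q] by simp_all

lemma grid_cell_index:
  fixes lo h x :: real
  assumes "h > 0" "lo \<le> x" "x < lo + h * real N"
  obtains i where "i < N" "lo + h * real i \<le> x" "x < lo + h * real i + h"
    "\<bar>x - (lo + h * real i + h / 2)\<bar> \<le> h / 2"
proof -
  define q where "q = (x - lo) / h"
  define i where "i = nat \<lfloor>q\<rfloor>"
  have "q \<ge> 0" "q < real N"
    using assms by (simp_all add: q_def field_simps)
  then have "real i \<le> q" "q < real i + 1"
    using nat_floor_bounds[of q] by (simp_all add: i_def)
  moreover from this have "i < N"
    using \<open>q < real N\<close> by linarith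
  moreover from calculation have "h * real i \<le> x - lo" "x - lo < h * real i + h"
    using \<open>h > 0\<close> mult_strict_left_mono[of q "real i + 1" h]
    by (simp_all add: q_def field_simps)
  moreover from calculation have "\<bar>x - (lo + h * real i + h / 2)\<bar> \<le> h / 2"
    unfolding abs_le_iff by linarith
  ultimately show ?thesis
    by (intro that[of i]) auto
qed

lemma constant_net_param_set:
  fixes \<epsilon> \<Gamma> am ap :: real
  assumes "\<epsilon> > 0" "am \<le> ap"
  obtains V :: "(real^'k::finite) set"
  where "finite V" "real (card V) \<le> (ap - am) / (2 * \<epsilon>) + 1"
    "\<forall>\<alpha>\<in>param_set \<Gamma> am ap. \<exists>v\<in>V. \<forall>j. \<bar>snd \<alpha> $ j - v $ j\<bar> \<le> \<Gamma> + \<epsilon>"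
proof
  define m where "m = nat \<lfloor>(ap - am) / (2 * \<epsilon>)\<rfloor>"
  define V where "V = (\<lambda>i. \<chi> j::'k. am + 2 * \<epsilon> * real i + \<epsilon>) ` {..<Suc m}"
  have m: "real m \<le> (ap - am) / (2 * \<epsilon>)" "(ap - am) / (2 * \<epsilon>) < real m + 1"
    using assms nat_floor_bounds unfolding m_def by simp_all
  show "finite V"
    by (simp add: V_def)
  have "card V \<le> Suc m"
    unfolding V_def by (metis card_image_le card_lessThan finite_lessThan)
  then show "real (card V) \<le> (ap - am) / (2 * \<epsilon>) + 1"
    using m(1) of_nat_le_iff[of "card V" "Suc m", where 'a = real] by simp
  show "\<forall>\<alpha>\<in>param_set \<Gamma> am ap. \<exists>v\<in>V. \<forall>j. \<bar>snd \<alpha> $ j - v $ j\<bar> \<le> \<Gamma> + \<epsilon>"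
  proof
    fix \<alpha> :: "real \<times> (real^'k)" assume "\<alpha> \<in> param_set \<Gamma> am ap"
    then have coord: "\<forall>j. \<bar>snd \<alpha> $ j - fst \<alpha>\<bar> \<le> \<Gamma>" and "am \<le> fst \<alpha>" "fst \<alpha> \<le> ap"
      by (auto simp: param_set_def)
    moreover have "fst \<alpha> < am + 2 * \<epsilon> * real (Suc m)"
      using \<open>fst \<alpha> \<le> ap\<close> m(2) \<open>\<epsilon> > 0\<close> by (simp add: field_simps)
    ultimately obtain i where "i < Suc m" "\<bar>fst \<alpha> - (am + 2 * \<epsilon> * real i + \<epsilon>)\<bar> \<le> \<epsilon>"
      using grid_cell_index[of "2 * \<epsilon>" am "fst \<alpha>" "Suc m"] \<open>\<epsilon> > 0\<close> by auto
    moreover have "\<bar>snd \<alpha> $ j - (am + 2 * \<epsilon> * real i + \<epsilon>)\<bar> \<le> \<Gamma> + \<epsilon>" for j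
      using coord[rule_format, of j] calculation(2) by (simp add: abs_le_iff)
    ultimately show "\<exists>v\<in>V. \<forall>j. \<bar>snd \<alpha> $ j - v $ j\<bar> \<le> \<Gamma> + \<epsilon>"
      unfolding V_def by (intro bexI[OF _ imageI]) auto
  qed
qed

lemma product_net_param_set:
  fixes \<Gamma> am ap :: real and P :: nat
  assumes "\<Gamma> > 0" "am \<le> ap" "P > 0"
  obtains V :: "(real^'k::finite) set"
  where "finite V" "real (card V) \<le> ((ap - am) / (2 * \<Gamma>) + 1) * real P ^ CARD('k)"
    "\<forall>\<alpha>\<in>param_set \<Gamma> am ap. \<exists>v\<in>V. \<forall>j. \<bar>snd \<alpha> $ j - v $ j\<bar> \<le> 2 * \<Gamma> / real P"
proof
  define m where "m = nat \<lfloor>(ap - am) / (2 * \<Gamma>)\<rfloor>"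
  define h where "h = 4 * \<Gamma> / real P"
  define lo where "lo b = am + 2 * \<Gamma> * real b - \<Gamma>" for b :: nat
  define pt where "pt = (\<lambda>(b, c). \<chi> j::'k. lo b + h * real (c j) + h / 2)"
  define V where "V = pt ` ({..<Suc m} \<times> (UNIV \<rightarrow>\<^sub>E {..<P}))"
  have m: "real m \<le> (ap - am) / (2 * \<Gamma>)" "(ap - am) / (2 * \<Gamma>) < real m + 1"
    using assms nat_floor_bounds unfolding m_def by simp_all
  have "h > 0"
    using assms by (simp add: h_def)
  show "finite V"
    by (simp add: V_def finite_PiE)
  have "card V \<le> Suc m * P ^ CARD('k)"
    using card_image_le[of "{..<Suc m} \<times> (UNIV \<rightarrow>\<^sub>E {..<P})" pt]
    by (simp add: V_def finite_PiE card_cartesian_product card_PiE)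
  then have "real (card V) \<le> (real m + 1) * real P ^ CARD('k)"
    by (metis of_nat_Suc of_nat_le_iff of_nat_mult of_nat_power add.commute)
  also have "\<dots> \<le> ((ap - am) / (2 * \<Gamma>) + 1) * real P ^ CARD('k)"
    using m(1) by (intro mult_right_mono) auto
  finally show "real (card V) \<le> ((ap - am) / (2 * \<Gamma>) + 1) * real P ^ CARD('k)" .
  show "\<forall>\<alpha>\<in>param_set \<Gamma> am ap. \<exists>v\<in>V. \<forall>j. \<bar>snd \<alpha> $ j - v $ j\<bar> \<le> 2 * \<Gamma> / real P"
  proof
    fix \<alpha> :: "real \<times> (real^'k)" assume "\<alpha> \<in> param_set \<Gamma> am ap"
    then have coord: "\<forall>j. \<bar>snd \<alpha> $ j - fst \<alpha>\<bar> \<le> \<Gamma>" and "am \<le> fst \<alpha>" "fst \<alpha> \<le> ap"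
      by (auto simp: param_set_def)
    moreover have "fst \<alpha> < am + 2 * \<Gamma> * real (Suc m)"
      using \<open>fst \<alpha> \<le> ap\<close> m(2) \<open>\<Gamma> > 0\<close> by (simp add: field_simps)
    ultimately obtain b where b: "b < Suc m" "am + 2 * \<Gamma> * real b \<le> fst \<alpha>"
      "fst \<alpha> < am + 2 * \<Gamma> * real b + 2 * \<Gamma>"
      using grid_cell_index[of "2 * \<Gamma>" am "fst \<alpha>" "Suc m"] \<open>\<Gamma> > 0\<close> by auto
    \<comment> \<open>each coordinate lies in the window \<open>[lo b, lo b + 4 \<Gamma>)\<close>, which is cut into \<open>P\<close> cells of width \<open>h\<close>\<close>
    have "\<exists>c. c < P \<and> \<bar>snd \<alpha> $ j - (lo b + h * real c + h / 2)\<bar> \<le> h / 2" for j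
    proof -
      have "h * real P = 4 * \<Gamma>"
        using \<open>P > 0\<close> by (simp add: h_def)
      moreover have "lo b \<le> snd \<alpha> $ j" "snd \<alpha> $ j < lo b + 4 * \<Gamma>"
        using coord[rule_format, of j] b by (auto simp: lo_def abs_le_iff)
      ultimately obtain c where "c < P" "\<bar>snd \<alpha> $ j - (lo b + h * real c + h / 2)\<bar> \<le> h / 2"
        using grid_cell_index[OF \<open>h > 0\<close>, of "lo b" "snd \<alpha> $ j" P] by auto
      then show ?thesis
        by blast
    qed
    then obtain c where c: "\<forall>j. c j < P \<and> \<bar>snd \<alpha> $ j - (lo b + h * real (c j) + h / 2)\<bar> \<le> h / 2"
      by metis
    have "pt (b, c) \<in> V"
      using b(1) c unfolding V_def by (intro imageI) (auto simp: PiE_iff)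
    moreover have "h / 2 = 2 * \<Gamma> / real P"
      by (simp add: h_def)
    ultimately show "\<exists>v\<in>V. \<forall>j. \<bar>snd \<alpha> $ j - v $ j\<bar> \<le> 2 * \<Gamma> / real P"
      using c by (intro bexI[of _ "pt (b, c)"]) (auto simp: pt_def)
  qed
qed

section \<open>Choice of the net resolution\<close>

lemma ln_2_ge_half: "1 / 2 \<le> ln (2 :: real)"
proof -
  have "ln (1 / 2 :: real) \<le> 1 / 2 - 1"
    by (rule ln_le_minus_one) simp
  then show ?thesis
    by (simp add: ln_div)
qed

lemma sqrt_log_sum_bound:
  fixes l q e \<Delta> n :: real
  assumes l: "ln 2 \<le> l" and "0 \<le> e" and q: "q \<le> ln 2 + e" and "0 < n"
    and \<Delta>: "\<Delta> \<le> 4 / sqrt n"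
  shows "2 * sqrt ((l + q) / (2 * n)) + \<Delta> \<le> 8 * sqrt (l / n) + 4 / sqrt n * sqrt e"
proof -
  define a where "a = sqrt l"
  define b where "b = sqrt e"
  define s where "s = sqrt n"
  have "1 / 2 \<le> l"
    using l ln_2_ge_half by linarith
  then have "(2 / 3)\<^sup>2 \<le> l"
    by (simp add: power2_eq_square)
  then have "2 / 3 \<le> a"
    unfolding a_def by (rule real_le_rsqrt)
  have "0 < s" "0 \<le> b" "s\<^sup>2 = n" "a\<^sup>2 = l" "b\<^sup>2 = e"
    using \<open>0 < n\<close> \<open>0 \<le> e\<close> \<open>1 / 2 \<le> l\<close> by (simp_all add: a_def b_def s_def)
  have "sqrt ((l + q) / (2 * n)) \<le> sqrt ((2 * l + e) / (2 * n))"
    using l q \<open>0 < n\<close> by (simp add: divide_right_mono)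
  also have "\<dots> \<le> (a + b) / s"
  proof (rule real_le_lsqrt)
    show "0 \<le> (a + b) / s"
      using \<open>2 / 3 \<le> a\<close> \<open>0 \<le> b\<close> \<open>0 < s\<close> by simp
    have "(2 * l + e) / 2 \<le> (a + b)\<^sup>2"
      using \<open>a\<^sup>2 = l\<close> \<open>b\<^sup>2 = e\<close> \<open>2 / 3 \<le> a\<close> \<open>0 \<le> b\<close> \<open>0 \<le> e\<close>
      by (simp add: power2_sum)
    then show "(2 * l + e) / (2 * n) \<le> ((a + b) / s)\<^sup>2"
      using \<open>s\<^sup>2 = n\<close> \<open>0 < n\<close>
      by (simp add: power_divide divide_right_mono flip: divide_divide_eq_left)
  qed
  finally have "2 * sqrt ((l + q) / (2 * n)) + \<Delta> \<le> (2 * a + 2 * b + 4) / s"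
    using \<Delta> \<open>0 < s\<close> by (simp add: s_def add_divide_distrib)
  also have "\<dots> \<le> (8 * a + 4 * b) / s"
    using \<open>2 / 3 \<le> a\<close> \<open>0 \<le> b\<close> \<open>0 < s\<close> by (intro divide_right_mono) auto
  also have "\<dots> = 8 * sqrt (l / n) + 4 / sqrt n * sqrt e"
    by (simp add: a_def b_def s_def real_sqrt_divide add_divide_distrib)
  finally show ?thesis .
qed

lemma param_set_net_budget_small_spread:
  fixes \<Gamma> am ap Lf Lc \<delta> :: real and n :: nat
  assumes "0 < Lf" "0 < Lc" "\<Gamma> \<le> 1 / (8 * sqrt (real n) * Lf * Lc)" "am \<le> ap" "0 < n"
    and \<delta>: "0 < \<delta>" "\<delta> \<le> 1"
  obtains V :: "(real^'k::finite) set" and N \<rho>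
  where "finite V" "real (card V) \<le> N" "\<delta> \<le> 2 * N"
    "\<forall>\<alpha>\<in>param_set \<Gamma> am ap. \<exists>v\<in>V. \<forall>j. \<bar>snd \<alpha> $ j - v $ j\<bar> \<le> \<rho>"
    "2 * sqrt (ln (2 * N / \<delta>) / (2 * real n)) + 8 * Lf * Lc * \<rho>
       \<le> 8 * sqrt (ln (2 / \<delta>) / real n)
          + 4 / sqrt (real n) * sqrt (ln (1 + 4 * (ap - am) * sqrt (real n) * Lf * Lc))"
proof -
  define \<epsilon> where "\<epsilon> = 1 / (8 * sqrt (real n) * Lf * Lc)"
  define N where "N = 1 + 4 * (ap - am) * sqrt (real n) * Lf * Lc"
  have "\<epsilon> > 0"
    using assms by (simp add: \<epsilon>_def)
  obtain V :: "(real^'k) set" where V: "finite V" "real (card V) \<le> (ap - am) / (2 * \<epsilon>) + 1"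
    and net: "\<forall>\<alpha>\<in>param_set \<Gamma> am ap. \<exists>v\<in>V. \<forall>j. \<bar>snd \<alpha> $ j - v $ j\<bar> \<le> \<Gamma> + \<epsilon>"
    using constant_net_param_set[OF \<open>\<epsilon> > 0\<close> \<open>am \<le> ap\<close>] by blast
  have "(ap - am) / (2 * \<epsilon>) + 1 = N"
    using assms by (simp add: \<epsilon>_def N_def field_simps)
  have "1 \<le> N"
    using assms by (simp add: N_def)
  have "\<Gamma> \<le> \<epsilon>"
    using assms by (simp add: \<epsilon>_def)
  then have "8 * Lf * Lc * (\<Gamma> + \<epsilon>) \<le> 8 * Lf * Lc * (2 * \<epsilon>)"
    using assms by (intro mult_left_mono) auto
  also have "\<dots> = 2 / sqrt (real n)"
    using assms by (simp add: \<epsilon>_def field_simps)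
  also have "\<dots> \<le> 4 / sqrt (real n)"
    by (simp add: divide_right_mono)
  finally have "2 * sqrt ((ln (2 / \<delta>) + ln N) / (2 * real n)) + 8 * Lf * Lc * (\<Gamma> + \<epsilon>)
      \<le> 8 * sqrt (ln (2 / \<delta>) / real n) + 4 / sqrt (real n) * sqrt (ln N)"
    using \<open>1 \<le> N\<close> \<delta> \<open>0 < n\<close> by (intro sqrt_log_sum_bound) (auto simp: field_simps)
  moreover have "ln (2 * N / \<delta>) = ln (2 / \<delta>) + ln N"
    using \<open>1 \<le> N\<close> \<delta> ln_mult[of "2 / \<delta>" N] by (simp add: mult.commute)
  ultimately show ?thesis
    using V net \<open>1 \<le> N\<close> \<delta> \<open>(ap - am) / (2 * \<epsilon>) + 1 = N\<close>
    by (intro that[of V N "\<Gamma> + \<epsilon>"]) (auto simp: N_def)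
qed

lemma param_set_net_budget_large_spread:
  fixes \<Gamma> am ap Lf Lc \<delta> :: real and n :: nat
  assumes "0 < Lf" "0 < Lc" "1 / (8 * sqrt (real n) * Lf * Lc) < \<Gamma>" "2 * \<Gamma> \<le> ap - am" "0 < n"
    and \<delta>: "0 < \<delta>" "\<delta> \<le> 1"
  obtains V :: "(real^'k::finite) set" and N \<rho>
  where "finite V" "real (card V) \<le> N" "\<delta> \<le> 2 * N"
    "\<forall>\<alpha>\<in>param_set \<Gamma> am ap. \<exists>v\<in>V. \<forall>j. \<bar>snd \<alpha> $ j - v $ j\<bar> \<le> \<rho>"
    "2 * sqrt (ln (2 * N / \<delta>) / (2 * real n)) + 8 * Lf * Lc * \<rho>
       \<le> 8 * sqrt (ln (2 / \<delta>) / real n)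
          + 4 / sqrt (real n) * sqrt (ln ((ap - am) / (2 * \<Gamma>))
              + (real CARD('k) + 1) * ln (8 * \<Gamma> * sqrt (real n) * Lf * Lc))"
proof -
  define r where "r = 8 * \<Gamma> * sqrt (real n) * Lf * Lc"
  define x where "x = (ap - am) / (2 * \<Gamma>)"
  define P where "P = nat \<lfloor>r\<rfloor>"
  define N where "N = 2 * x * r ^ CARD('k)"
  have "0 < 1 / (8 * sqrt (real n) * Lf * Lc)"
    using assms by simp
  then have "0 < \<Gamma>"
    using assms by linarith
  have "1 < r"
    using assms by (simp add: r_def field_simps)
  have "1 \<le> x"
    using assms \<open>0 < \<Gamma>\<close> by (simp add: x_def field_simps)
  have "am \<le> ap"
    using assms \<open>0 < \<Gamma>\<close> by linarith
  have "real P \<le> r" "r < real P + 1"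
    using nat_floor_bounds[of r] \<open>1 < r\<close> by (simp_all add: P_def)
  then have "0 < P"
    using \<open>1 < r\<close> by linarith
  then have "r \<le> 2 * real P"
    using \<open>r < real P + 1\<close> by linarith
  obtain V :: "(real^'k) set" where V: "finite V" "real (card V) \<le> (x + 1) * real P ^ CARD('k)"
    and net: "\<forall>\<alpha>\<in>param_set \<Gamma> am ap. \<exists>v\<in>V. \<forall>j. \<bar>snd \<alpha> $ j - v $ j\<bar> \<le> 2 * \<Gamma> / real P"
    using product_net_param_set[OF \<open>0 < \<Gamma>\<close> \<open>am \<le> ap\<close> \<open>0 < P\<close>, folded x_def] by blast
  have "(x + 1) * real P ^ CARD('k) \<le> N"
    unfolding N_def using \<open>1 \<le> x\<close> \<open>real P \<le> r\<close>
    by (intro mult_mono power_mono) auto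
  have "1 \<le> r ^ CARD('k)"
    using \<open>1 < r\<close> by (intro one_le_power) simp
  then have "1 * 1 \<le> x * r ^ CARD('k)"
    using \<open>1 \<le> x\<close> by (intro mult_mono) auto
  then have "1 \<le> N"
    by (simp add: N_def)
  have "8 * Lf * Lc * (2 * \<Gamma> / real P) \<le> 8 * Lf * Lc * (4 * \<Gamma> / r)"
    using assms \<open>0 < \<Gamma>\<close> \<open>0 < P\<close> \<open>r \<le> 2 * real P\<close> \<open>1 < r\<close>
    by (intro mult_left_mono) (auto simp: field_simps)
  also have "\<dots> = 4 / sqrt (real n)"
    using assms \<open>0 < \<Gamma>\<close> by (simp add: r_def field_simps)
  finally have "2 * sqrt ((ln (2 / \<delta>) + ln N) / (2 * real n)) + 8 * Lf * Lc * (2 * \<Gamma> / real P)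
      \<le> 8 * sqrt (ln (2 / \<delta>) / real n) + 4 / sqrt (real n) * sqrt (ln x + (real CARD('k) + 1) * ln r)"
    using \<open>1 \<le> x\<close> \<open>1 < r\<close> \<delta> \<open>0 < n\<close>
    by (intro sqrt_log_sum_bound) (auto simp: N_def ln_mult ln_realpow field_simps)
  moreover have "ln (2 * N / \<delta>) = ln (2 / \<delta>) + ln N"
    using \<open>1 \<le> N\<close> \<delta> ln_mult[of "2 / \<delta>" N] by (simp add: mult.commute)
  ultimately show ?thesis
    using V net \<open>1 \<le> N\<close> \<delta> \<open>(x + 1) * real P ^ CARD('k) \<le> N\<close>
    by (intro that[of V N "2 * \<Gamma> / real P"]) (auto simp: x_def r_def)
qed

lemma param_set_net_budget:
  fixes \<Gamma> am ap Lf Lc \<delta> :: real and n :: nat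
  assumes "0 < Lf" "0 < Lc" "am \<le> ap" "2 * \<Gamma> \<le> ap - am" "0 < n" "0 < \<delta>" "\<delta> \<le> 1"
  obtains V :: "(real^'k::finite) set" and N \<rho>
  where "finite V" "real (card V) \<le> N" "\<delta> \<le> 2 * N"
    "\<forall>\<alpha>\<in>param_set \<Gamma> am ap. \<exists>v\<in>V. \<forall>j. \<bar>snd \<alpha> $ j - v $ j\<bar> \<le> \<rho>"
    "2 * sqrt (ln (2 * N / \<delta>) / (2 * real n)) + 8 * Lf * Lc * \<rho>
       \<le> 8 * sqrt (ln (2 / \<delta>) / real n)
          + (if \<Gamma> \<le> 1 / (8 * sqrt (real n) * Lf * Lc)
             then 4 / sqrt (real n) * sqrt (ln (1 + 4 * (ap - am) * sqrt (real n) * Lf * Lc))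
             else 4 / sqrt (real n) * sqrt (ln ((ap - am) / (2 * \<Gamma>))
                    + (real CARD('k) + 1) * ln (8 * \<Gamma> * sqrt (real n) * Lf * Lc)))"
proof (cases "\<Gamma> \<le> 1 / (8 * sqrt (real n) * Lf * Lc)")
  case True
  show ?thesis
    by (rule param_set_net_budget_small_spread[OF assms(1,2) True assms(3,5-7)]) (use True that in auto)
next
  case False
  then have "1 / (8 * sqrt (real n) * Lf * Lc) < \<Gamma>"
    by simp
  then show ?thesis
    by (rule param_set_net_budget_large_spread[OF assms(1,2) _ assms(4-7)]) (use False that in auto)
qed

theorem theorem2:
  fixes D :: "('x \<times> 'k::finite) measure"
    and f :: "'x \<Rightarrow> real^'k"
    and yhat :: "'x \<Rightarrow> 'k"
    and L :: "real^'k \<Rightarrow> real^'k \<Rightarrow> real"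
    and Lf Lc \<Gamma> am ap \<delta> :: real
    and n :: nat
    and astar :: "(nat \<Rightarrow> 'x \<times> 'k) \<Rightarrow> real \<times> (real^'k)"
  assumes D: "prob_space D"
    and meas_f: "(\<lambda>p. f (fst p)) \<in> borel_measurable D"
    and meas_yhat: "(\<lambda>p. yhat (fst p)) \<in> measurable D (count_space UNIV)"
    and meas_y: "snd \<in> measurable D (count_space UNIV)"
    and meas_L: "(\<lambda>(u, v). L u v) \<in> borel_measurable borel"
    and bound_f: "\<forall>x. norm (f x) \<le> Lf"
    and Lf_pos: "Lf > 0" and Lc_pos: "Lc > 0"
    and L_range: "\<forall>u v. 0 \<le> L u v \<and> L u v \<le> 1"
    and L_lip: "\<forall>u v w. \<bar>L u v - L u w\<bar> \<le> Lc * dist v w"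
    and yhat_argmax: "\<forall>x k. softmax (f x) $ k \<le> softmax (f x) $ yhat x"
    and \<Gamma>_pos: "\<Gamma> > 0"
    and am_ap: "am \<le> ap" and gap: "ap - am \<ge> 2 * \<Gamma>"
    and n_pos: "n \<ge> 1"
    and \<delta>: "0 < \<delta>" "\<delta> < 1"
    and astar_min: "\<forall>S. astar S \<in> param_set \<Gamma> am ap \<and>
        (\<forall>\<alpha>\<in>param_set \<Gamma> am ap. cw_loss_emp L f yhat (astar S) n S \<le> cw_loss_emp L f yhat \<alpha> n S)"
  shows "\<exists>A\<in>sets (PiM {..<n} (\<lambda>_. D)).
     measure (PiM {..<n} (\<lambda>_. D)) A \<ge> 1 - \<delta> \<and>
     (\<forall>S\<in>A. cw_loss_pop L f yhat (astar S) D
        \<le> (INF \<alpha>\<in>param_set \<Gamma> am ap. cw_loss_pop L f yhat \<alpha> D)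
           + 8 * sqrt (ln (2 / \<delta>) / real n)
           + (if \<Gamma> \<le> 1 / (8 * sqrt (real n) * Lf * Lc)
              then 4 / sqrt (real n) * sqrt (ln (1 + 4 * (ap - am) * sqrt (real n) * Lf * Lc))
              else 4 / sqrt (real n) * sqrt (ln ((ap - am) / (2 * \<Gamma>))
                     + (real CARD('k) + 1) * ln (8 * \<Gamma> * sqrt (real n) * Lf * Lc))))"
proof -
  have "0 < n" "\<delta> \<le> 1"
    using n_pos \<delta> by simp_all
  show ?thesis
  proof (rule param_set_net_budget[where 'k = 'k, OF Lf_pos Lc_pos am_ap gap \<open>0 < n\<close> \<delta>(1) \<open>\<delta> \<le> 1\<close>], goal_cases)
    case (1 V N \<rho>)
    from cw_excess_risk_bound_of_net[OF D meas_f meas_yhat meas_y meas_L bound_f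
        less_imp_le[OF Lc_pos] L_range L_lip \<open>0 < n\<close> \<delta>(1) 1(3) astar_min 1(1,2,4,5)]
    show ?case
      by (simp only: add.assoc)
  qed
qed

end
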